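(* Let $\ell, n_1,\dots,n_\ell$ be positive integers, let $K_1,\dots,K_\ell$ be finite fields with a common finite extension field $\mathbb{F}$, and let $n=n_1+\cdots+n_\ell$. Let $\mathcal{C}\subseteq\mathbb{F}^n$ be an $\mathbb{F}$-linear code of dimension $k\geq 1$ with generator matrix $\mathbf{G}$ (a $k\times n$ matrix over $\mathbb{F}$). Then $\mathcal{C}$ is MSRD if and only if $\mathbf{G}\mathbf{A}$ is invertible for every $n\times k$ matrix $\mathbf{A}$ of rank $k$ of the block-diagonal form $\mathbf{A}=\mathrm{diag}(\mathbf{A}_1,\dots,\mathbf{A}_\ell)$, where each $\mathbf{A}_i$ is an $n_i\times k_i$ matrix with entries in $K_i$, $k_i\leq n_i$, and $\sum_{i=1}^{\ell}k_i=k$.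
   Context: Write vectors $\mathbf{c}\in\mathbb{F}^n$ as $\mathbf{c}=(\mathbf{c}^{(1)},\dots,\mathbf{c}^{(\ell)})$ with $\mathbf{c}^{(i)}\in\mathbb{F}^{n_i}$. Fix for each $i$ an ordered basis of $\mathbb{F}$ over $K_i$ (with $m_i=[\mathbb{F}:K_i]$), and let $\Gamma_i(\mathbf{c}^{(i)})$ be the $m_i\times n_i$ matrix over $K_i$ whose $j$-th column is the coordinate vector of the $j$-th entry of $\mathbf{c}^{(i)}$ with respect to this basis. The sum-rank weight of $\mathbf{c}$ is $\mathrm{srank}(\mathbf{c})=\sum_{i=1}^\ell \mathrm{rank}_{K_i}(\Gamma_i(\mathbf{c}^{(i)}))$ (independent of the chosen bases). The minimum sum-rank distance of $\mathcal{C}$ is $d=\min\{\mathrm{srank}(\mathbf{c}):\mathbf{c}\in\mathcal{C},\ \mathbf{c}\neq 0\}$, and $\mathcal{C}$ is called MSRD (maximum sum-rank distance) if $d=n-k+1$. *)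

theory Defs
  imports "Jordan_Normal_Form.DL_Rank_Submatrix"
begin

text \<open>A subfield K of the ambient (finite) field 'a; 'a is a common extension of all K_i.\<close>
definition is_subfield :: "'a::field set \<Rightarrow> bool" where
  "is_subfield K \<longleftrightarrow> 0 \<in> K \<and> 1 \<in> K \<and>
     (\<forall>x\<in>K. \<forall>y\<in>K. x + y \<in> K \<and> x * y \<in> K) \<and>
     (\<forall>x\<in>K. - x \<in> K \<and> inverse x \<in> K)"

definition offs :: "(nat \<Rightarrow> nat) \<Rightarrow> nat \<Rightarrow> nat" where
  "offs nn i = (\<Sum>j<i. nn j)"

definition lin_indep_over :: "'a::field set \<Rightarrow> (nat \<Rightarrow> 'a) \<Rightarrow> nat set \<Rightarrow> bool" where
  "lin_indep_over K f J \<longleftrightarrow>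
     (\<forall>a. (\<forall>j\<in>J. a j \<in> K) \<and> (\<Sum>j\<in>J. a j * f j) = 0 \<longrightarrow> (\<forall>j\<in>J. a j = 0))"

text \<open>rank_K of Gamma(x_0,...,x_{m-1}): the maximal number of K-linearly independent
  columns; the j-th column is the coordinate vector of x_j over K, and the coordinate map
  is a K-linear isomorphism, so columns are independent iff the entries are.\<close>
definition rank_over :: "'a::field set \<Rightarrow> (nat \<Rightarrow> 'a) \<Rightarrow> nat \<Rightarrow> nat" where
  "rank_over K f m = Max {card J | J. J \<subseteq> {..<m} \<and> lin_indep_over K f J}"

definition srank :: "nat \<Rightarrow> (nat \<Rightarrow> nat) \<Rightarrow> (nat \<Rightarrow> 'a::field set) \<Rightarrow> 'a vec \<Rightarrow> nat" where
  "srank l nn K c = (\<Sum>i<l. rank_over (K i) (\<lambda>j. c $ (offs nn i + j)) (nn i))"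

definition min_srank_dist :: "nat \<Rightarrow> (nat \<Rightarrow> nat) \<Rightarrow> (nat \<Rightarrow> 'a::field set) \<Rightarrow> nat \<Rightarrow> 'a vec set \<Rightarrow> nat" where
  "min_srank_dist l nn K n C = Min {srank l nn K c | c. c \<in> C \<and> c \<noteq> 0\<^sub>v n}"

definition MSRD :: "nat \<Rightarrow> (nat \<Rightarrow> nat) \<Rightarrow> (nat \<Rightarrow> 'a::field set) \<Rightarrow> nat \<Rightarrow> nat \<Rightarrow> 'a vec set \<Rightarrow> bool" where
  "MSRD l nn K n k C \<longleftrightarrow> min_srank_dist l nn K n C = n - k + 1"

definition block_diag :: "nat \<Rightarrow> (nat \<Rightarrow> nat) \<Rightarrow> (nat \<Rightarrow> nat) \<Rightarrow> (nat \<Rightarrow> 'a::zero mat) \<Rightarrow> 'a mat" where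
  "block_diag l nn ks B = mat (offs nn l) (offs ks l) (\<lambda>(r, c).
     (let P = (\<lambda>i. i < l \<and> offs nn i \<le> r \<and> r < offs nn (Suc i) \<and> offs ks i \<le> c \<and> c < offs ks (Suc i))
      in if \<exists>i. P i then (let i = (SOME i. P i) in B i $$ (r - offs nn i, c - offs ks i)) else 0))"

end

theory Submission
  imports Defs
begin

text \<open>
  Let A = diag(A_1, ..., A_l) with A_i an n_i x k_i matrix over K_i of full column rank. If A^T
  annihilates c, then rank_K_i(c^(i)) + k_i \<le> n_i for every i, because the columns of A_i together
  with the unit vectors supported on a maximal K_i-independent set of entries of c^(i) are
  K_i-independent in K_i^(n_i). Conversely, the K_i-linear relations among the entries of c^(i)
  provide such an A_i whenever k_i \<le> n_i - rank_K_i(c^(i)). Hence some admissible A annihilates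
  c iff srank(c) + k \<le> n. As G has full row rank, G A is singular iff A^T annihilates a nonzero
  codeword, so the invertibility condition says that every nonzero codeword has sum-rank weight
  at least n - k + 1; by the Singleton bound (some nonzero codeword vanishes on k - 1 coordinates)
  this is the MSRD property.
\<close>

section \<open>Block decomposition of vectors and matrices\<close>

lemma offs_Suc: "offs nn (Suc i) = offs nn i + nn i"
  by (simp add: offs_def)

lemma offs_mono: "i \<le> j \<Longrightarrow> offs nn i \<le> offs nn j"
  unfolding offs_def by (rule sum_mono2) auto

lemma offs_add_less: "i < l \<Longrightarrow> r < nn i \<Longrightarrow> offs nn i + r < offs nn l"
  using offs_mono[of "Suc i" l nn] by (simp add: offs_Suc)

lemma offs_add_inject:
  assumes "r < nn i" "r' < nn i'" "offs nn i + r = offs nn i' + r'"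
  shows "i = i' \<and> r = r'"
proof -
  have "\<not> i < i'"
  proof
    assume "i < i'"
    then have "offs nn i + nn i \<le> offs nn i'" using offs_mono[of "Suc i" i' nn] by (simp add: offs_Suc)
    then show False using assms by linarith
  qed
  moreover have "\<not> i' < i"
  proof
    assume "i' < i"
    then have "offs nn i' + nn i' \<le> offs nn i" using offs_mono[of "Suc i'" i nn] by (simp add: offs_Suc)
    then show False using assms by linarith
  qed
  ultimately show ?thesis using assms by simp
qed

lemma offs_decompose:
  assumes "s < offs nn l"
  obtains i r where "i < l" "r < nn i" "s = offs nn i + r"
proof -
  have "\<exists>i<l. \<exists>r<nn i. s = offs nn i + r"
    using assms
  proof (induction l)
    case 0 then show ?case by (simp add: offs_def)
  next
    case (Suc l)
    show ?case
    proof (cases "s < offs nn l")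
      case True then show ?thesis using Suc.IH less_SucI by blast
    next
      case False
      then have "l < Suc l \<and> s - offs nn l < nn l \<and> s = offs nn l + (s - offs nn l)"
        using Suc.prems by (simp add: offs_Suc)
      then show ?thesis by blast
    qed
  qed
  then show ?thesis using that by blast
qed

lemma sum_lessThan_add: "(\<Sum>s<(a::nat) + b. g s) = (\<Sum>s<a. g s) + (\<Sum>r<b. g (a + r))"
  by (induction b) (auto simp: add.assoc)

lemma sum_lessThan_offs: "(\<Sum>s<offs nn l. g s) = (\<Sum>i<l. \<Sum>r<nn i. g (offs nn i + r))"
  by (induction l) (auto simp: offs_Suc sum_lessThan_add offs_def[of nn 0])

definition block_vec :: "(nat \<Rightarrow> nat) \<Rightarrow> nat \<Rightarrow> 'a vec \<Rightarrow> 'a vec" where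
  "block_vec nn i v = vec (nn i) (\<lambda>r. v $ (offs nn i + r))"

lemma block_vec_carrier [simp]: "block_vec nn i v \<in> carrier_vec (nn i)"
  by (simp add: block_vec_def)

lemma block_vec_zero [simp]: "i < l \<Longrightarrow> block_vec nn i (0\<^sub>v (offs nn l)) = 0\<^sub>v (nn i)"
  by (intro eq_vecI) (auto simp: block_vec_def offs_add_less)

lemma eq_0_iff_block_vecs_eq_0:
  assumes "v \<in> carrier_vec (offs nn l)"
  shows "v = 0\<^sub>v (offs nn l) \<longleftrightarrow> (\<forall>i<l. block_vec nn i v = 0\<^sub>v (nn i))"
proof
  assume "\<forall>i<l. block_vec nn i v = 0\<^sub>v (nn i)"
  then have "v $ (offs nn i + r) = 0" if "i < l" "r < nn i" for i r
    using that by (metis block_vec_def index_vec index_zero_vec(1))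
  then show "v = 0\<^sub>v (offs nn l)"
    using assms by (intro eq_vecI) (auto elim: offs_decompose)
qed simp

definition single_block_vec :: "(nat \<Rightarrow> nat) \<Rightarrow> nat \<Rightarrow> nat \<Rightarrow> 'a::zero vec \<Rightarrow> 'a vec" where
  "single_block_vec nn l i w =
     vec (offs nn l) (\<lambda>s. if offs nn i \<le> s \<and> s < offs nn i + nn i then w $ (s - offs nn i) else 0)"

lemma block_vec_single_block_vec:
  assumes "i < l" "j < l" "w \<in> carrier_vec (nn i)"
  shows "block_vec nn j (single_block_vec nn l i w) = (if j = i then w else 0\<^sub>v (nn j))"
proof (rule eq_vecI)
  fix r assume "r < dim_vec (if j = i then w else 0\<^sub>v (nn j))"
  then have r: "r < nn j" using assms(3) by (auto split: if_splits)
  have "\<not> (offs nn i \<le> offs nn j + r \<and> offs nn j + r < offs nn i + nn i)" if "j \<noteq> i"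
    using that r offs_add_inject[of "offs nn j + r - offs nn i" nn i r j] by auto
  then show "block_vec nn j (single_block_vec nn l i w) $ r = (if j = i then w else 0\<^sub>v (nn j)) $ r"
    using r assms offs_add_less[of j l r nn, OF assms(2) r] by (auto simp: block_vec_def single_block_vec_def)
qed (use assms in \<open>simp add: block_vec_def\<close>)

lemma single_block_vec_carrier [simp]: "single_block_vec nn l i w \<in> carrier_vec (offs nn l)"
  by (simp add: single_block_vec_def)

lemma block_diag_carrier: "block_diag l nn ks B \<in> carrier_mat (offs nn l) (offs ks l)"
  unfolding block_diag_def by simp

lemma block_diag_index:
  assumes "i < l" "r < nn i" "i' < l" "t < ks i'"
  shows "block_diag l nn ks B $$ (offs nn i + r, offs ks i' + t) = (if i = i' then B i $$ (r, t) else 0)"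
proof -
  let ?r = "offs nn i + r" and ?c = "offs ks i' + t"
  let ?P = "\<lambda>j. j < l \<and> offs nn j \<le> ?r \<and> ?r < offs nn (Suc j) \<and> offs ks j \<le> ?c \<and> ?c < offs ks (Suc j)"
  have P: "?P j \<longleftrightarrow> j = i \<and> j = i'" for j
    using offs_add_inject[of "?r - offs nn j" nn j r i] offs_add_inject[of "?c - offs ks j" ks j t i'] assms
    by (auto simp: offs_Suc)
  then have "(SOME j. ?P j) = i" if "i = i'" using that by simp
  then show ?thesis
    unfolding block_diag_def using P assms offs_add_less[of i l r nn] offs_add_less[of i' l t ks]
    by (auto simp: Let_def)
qed

lemma block_vec_block_diag_mult:
  assumes "i < l" "B i \<in> carrier_mat (nn i) (ks i)" "W \<in> carrier_vec (offs ks l)"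
  shows "block_vec nn i (block_diag l nn ks B *\<^sub>v W) = B i *\<^sub>v block_vec ks i W"
proof (rule eq_vecI)
  fix r assume "r < dim_vec (B i *\<^sub>v block_vec ks i W)"
  then have r: "r < nn i" using assms(2) by simp
  have "(block_diag l nn ks B *\<^sub>v W) $ (offs nn i + r)
      = (\<Sum>s<offs ks l. block_diag l nn ks B $$ (offs nn i + r, s) * W $ s)"
    using assms r offs_add_less[of i l r nn] block_diag_carrier[of l nn ks B]
    by (auto simp: scalar_prod_def atLeast0LessThan)
  also have "\<dots> = (\<Sum>i'<l. \<Sum>t<ks i'. block_diag l nn ks B $$ (offs nn i + r, offs ks i' + t) * W $ (offs ks i' + t))"
    by (rule sum_lessThan_offs)
  also have "\<dots> = (\<Sum>i'<l. if i' = i then (\<Sum>t<ks i. B i $$ (r, t) * W $ (offs ks i + t)) else 0)"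
    using assms r by (intro sum.cong refl) (auto simp: block_diag_index)
  also have "\<dots> = (\<Sum>t<ks i. B i $$ (r, t) * W $ (offs ks i + t))"
    using assms by simp
  finally show "block_vec nn i (block_diag l nn ks B *\<^sub>v W) $ r = (B i *\<^sub>v block_vec ks i W) $ r"
    using assms r by (auto simp: block_vec_def scalar_prod_def atLeast0LessThan)
qed (use assms in \<open>simp add: block_vec_def\<close>)

lemma block_vec_transpose_block_diag_mult:
  assumes "i < l" "B i \<in> carrier_mat (nn i) (ks i)" "c \<in> carrier_vec (offs nn l)"
  shows "block_vec ks i (transpose_mat (block_diag l nn ks B) *\<^sub>v c) = transpose_mat (B i) *\<^sub>v block_vec nn i c"
proof (rule eq_vecI)
  fix t assume "t < dim_vec (transpose_mat (B i) *\<^sub>v block_vec nn i c)"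
  then have t: "t < ks i" using assms(2) by simp
  have "(transpose_mat (block_diag l nn ks B) *\<^sub>v c) $ (offs ks i + t)
      = (\<Sum>s<offs nn l. block_diag l nn ks B $$ (s, offs ks i + t) * c $ s)"
    using assms t offs_add_less[of i l t ks] block_diag_carrier[of l nn ks B]
    by (auto simp: scalar_prod_def atLeast0LessThan)
  also have "\<dots> = (\<Sum>i'<l. \<Sum>r<nn i'. block_diag l nn ks B $$ (offs nn i' + r, offs ks i + t) * c $ (offs nn i' + r))"
    by (rule sum_lessThan_offs)
  also have "\<dots> = (\<Sum>i'<l. if i' = i then (\<Sum>r<nn i. B i $$ (r, t) * c $ (offs nn i + r)) else 0)"
    using assms t by (intro sum.cong refl) (auto simp: block_diag_index)
  also have "\<dots> = (\<Sum>r<nn i. B i $$ (r, t) * c $ (offs nn i + r))"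
    using assms by simp
  finally show "block_vec ks i (transpose_mat (block_diag l nn ks B) *\<^sub>v c) $ t
      = (transpose_mat (B i) *\<^sub>v block_vec nn i c) $ t"
    using assms t by (auto simp: block_vec_def scalar_prod_def atLeast0LessThan)
qed (use assms in \<open>simp add: block_vec_def\<close>)

lemma mult_mat_vec_zero [simp]: "A \<in> carrier_mat nr nc \<Longrightarrow> A *\<^sub>v 0\<^sub>v nc = 0\<^sub>v nr"
  by (intro eq_vecI) auto

definition trivial_kernel :: "'a::field mat \<Rightarrow> bool" where
  "trivial_kernel A \<longleftrightarrow>
     (\<forall>v\<in>carrier_vec (dim_col A). A *\<^sub>v v = 0\<^sub>v (dim_row A) \<longrightarrow> v = 0\<^sub>v (dim_col A))"

lemma trivial_kernelI:
  assumes "A \<in> carrier_mat nr nc" "\<And>v. v \<in> carrier_vec nc \<Longrightarrow> A *\<^sub>v v = 0\<^sub>v nr \<Longrightarrow> v = 0\<^sub>v nc"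
  shows "trivial_kernel A"
  using assms by (auto simp: trivial_kernel_def)

lemma trivial_kernelD:
  assumes "trivial_kernel A" "A \<in> carrier_mat nr nc" "v \<in> carrier_vec nc" "A *\<^sub>v v = 0\<^sub>v nr"
  shows "v = 0\<^sub>v nc"
  using assms by (auto simp: trivial_kernel_def)

lemma trivial_kernel_block_diag_iff:
  assumes B: "\<forall>i<l. B i \<in> carrier_mat (nn i) (ks i)"
  shows "trivial_kernel (block_diag l nn ks B) \<longleftrightarrow> (\<forall>i<l. trivial_kernel (B i))"
proof
  assume inj: "trivial_kernel (block_diag l nn ks B)"
  show "\<forall>i<l. trivial_kernel (B i)"
  proof (intro allI impI)
    fix i assume i: "i < l"
    show "trivial_kernel (B i)"
    proof (rule trivial_kernelI)
      fix w assume w: "w \<in> carrier_vec (ks i)" and Bw: "B i *\<^sub>v w = 0\<^sub>v (nn i)"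
      let ?W = "single_block_vec ks l i w"
      have blocks: "block_vec ks j ?W = (if j = i then w else 0\<^sub>v (ks j))" if "j < l" for j
        using block_vec_single_block_vec[of i l j w ks, OF i that w] .
      have "block_vec nn j (block_diag l nn ks B *\<^sub>v ?W) = 0\<^sub>v (nn j)" if "j < l" for j
        using block_vec_block_diag_mult[of j l B nn ks ?W] B blocks[OF that] Bw that by auto
      then have "block_diag l nn ks B *\<^sub>v ?W = 0\<^sub>v (offs nn l)"
        using eq_0_iff_block_vecs_eq_0 block_diag_carrier[of l nn ks B]
        by (metis carrier_vecI dim_mult_mat_vec carrier_matD(1))
      then have "?W = 0\<^sub>v (offs ks l)"
        using trivial_kernelD[OF inj block_diag_carrier] by simp
      then show "w = 0\<^sub>v (ks i)"
        using eq_0_iff_block_vecs_eq_0[of ?W ks l] blocks i by auto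
    qed (use B i in blast)
  qed
next
  assume inj: "\<forall>i<l. trivial_kernel (B i)"
  show "trivial_kernel (block_diag l nn ks B)"
  proof (rule trivial_kernelI[OF block_diag_carrier])
    fix W assume W: "W \<in> carrier_vec (offs ks l)" and AW: "block_diag l nn ks B *\<^sub>v W = 0\<^sub>v (offs nn l)"
    have "block_vec ks i W = 0\<^sub>v (ks i)" if i: "i < l" for i
    proof (rule trivial_kernelD[OF inj[rule_format, OF i]])
      show "B i \<in> carrier_mat (nn i) (ks i)" using B i by blast
      show "B i *\<^sub>v block_vec ks i W = 0\<^sub>v (nn i)"
        using block_vec_block_diag_mult[of i l B nn ks W] B i W AW by simp
    qed simp
    then show "W = 0\<^sub>v (offs ks l)" using eq_0_iff_block_vecs_eq_0[OF W] by blast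
  qed
qed

lemma (in vec_space) rank_le_card_set_cols:
  assumes A: "A \<in> carrier_mat n nc"
  shows "rank A \<le> card (set (cols A))"
proof -
  obtain S where "maximal S (\<lambda>T. T \<subseteq> set (cols A) \<and> lin_indpt T)"
    using maximal_exists[of "\<lambda>T. T \<subseteq> set (cols A) \<and> lin_indpt T" "card (set (cols A))" "{}"]
    by (meson List.finite_set card_mono empty_iff empty_subsetI finite_lin_indpt2 rev_finite_subset)
  then show ?thesis using rank_card_indpt[OF A] by (auto simp: card_mono maximal_def)
qed

lemma rank_eq_dim_col_iff_trivial_kernel:
  fixes A :: "'a::field mat"
  assumes A: "A \<in> carrier_mat n nc"
  shows "vec_space.rank n A = nc \<longleftrightarrow> trivial_kernel A"
proof
  assume rk: "vec_space.rank n A = nc"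
  have dist: "distinct (cols A)"
  proof (rule ccontr)
    assume "\<not> distinct (cols A)"
    then have "card (set (cols A)) < nc"
      using A card_distinct[of "cols A"] card_length[of "cols A"]
      by (metis cols_length carrier_matD(2) le_neq_implies_less)
    then show False using vec_space.rank_le_card_set_cols[OF A] rk by simp
  qed
  show "trivial_kernel A"
  proof (rule trivial_kernelI[OF A], rule ccontr)
    fix v assume "v \<in> carrier_vec nc" "A *\<^sub>v v = 0\<^sub>v n" "v \<noteq> 0\<^sub>v nc"
    then show False
      using vec_space.lin_depI[OF A _ _ _ dist] vec_space.full_rank_lin_indpt[OF A rk dist] by blast
  qed
next
  assume ker: "trivial_kernel A"
  have dist: "distinct (cols A)"
  proof (rule ccontr)
    assume "\<not> distinct (cols A)"
    then obtain i j where ij: "i \<noteq> j" "i < nc" "j < nc" "col A i = col A j"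
      using A distinct_conv_nth[of "cols A"] by auto
    define v :: "'a vec" where "v = unit_vec nc i - unit_vec nc j"
    have unit: "A *\<^sub>v unit_vec nc t = col A t" if "t < nc" for t
      using A that by (intro eq_vecI) auto
    have "col A j \<in> carrier_vec n" using A by (intro carrier_vecI) simp
    then have "A *\<^sub>v v = 0\<^sub>v n"
      using A ij by (simp add: v_def mult_minus_distrib_mat_vec unit)
    then have "v = 0\<^sub>v nc" using trivial_kernelD[OF ker A] by (simp add: v_def)
    moreover have "v $ i = 1" using ij by (simp add: v_def)
    ultimately show False using ij by simp
  qed
  have "module.lin_indpt class_ring (module_vec TYPE('a) n) (set (cols A))"
    using vec_space.lin_depE[OF A _ dist] trivial_kernelD[OF ker A] by metis
  then show "vec_space.rank n A = nc" using vec_space.lin_indpt_full_rank[OF A dist] by blast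
qed

lemma invertible_mat_iff_det_nonzero:
  fixes M :: "'a::field mat"
  assumes M: "M \<in> carrier_mat k k"
  shows "invertible_mat M \<longleftrightarrow> det M \<noteq> 0"
proof
  assume "invertible_mat M"
  then obtain B where MB: "M * B = 1\<^sub>m k" and BM: "B * M = 1\<^sub>m (dim_row B)"
    using M unfolding invertible_mat_def inverts_mat_def by auto
  have "B \<in> carrier_mat k k"
    using arg_cong[OF MB, of dim_col] arg_cong[OF BM, of dim_col] M by auto
  then have "det M * det B = 1" using det_mult[OF M] MB by (metis det_one)
  then show "det M \<noteq> 0" by auto
next
  assume "det M \<noteq> 0"
  from det_non_zero_imp_unit[OF M this, of "()"]
  obtain B where "B \<in> carrier_mat k k" "B * M = 1\<^sub>m k" "M * B = 1\<^sub>m k"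
    unfolding Units_def ring_mat_def by auto
  then show "invertible_mat M" unfolding invertible_mat_def inverts_mat_def using M by auto
qed

lemma invertible_mat_iff_trivial_kernel_transpose:
  fixes M :: "'a::field mat"
  assumes M: "M \<in> carrier_mat k k"
  shows "invertible_mat M \<longleftrightarrow> trivial_kernel (transpose_mat M)"
  using det_0_iff_vec_prod_zero_field[of "transpose_mat M" k] M
  by (auto simp: invertible_mat_iff_det_nonzero det_transpose trivial_kernel_def)

lemma trivial_kernel_transpose_if_full_rank:
  fixes G :: "'a::field mat"
  assumes G: "G \<in> carrier_mat k n" and rk: "vec_space.rank k G = k"
  shows "trivial_kernel (transpose_mat G)"
proof (rule trivial_kernelI)
  fix x assume x: "x \<in> carrier_vec k" and Gx: "transpose_mat G *\<^sub>v x = 0\<^sub>v n"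
  interpret vs: vec_space "TYPE('a)" k .
  obtain S where mS: "maximal S (\<lambda>T. T \<subseteq> set (cols G) \<and> vs.lin_indpt T)"
    using maximal_exists[of "\<lambda>T. T \<subseteq> set (cols G) \<and> vs.lin_indpt T" "card (set (cols G))" "{}"]
    by (meson List.finite_set card_mono empty_iff empty_subsetI vs.finite_lin_indpt2 rev_finite_subset)
  have colsc: "set (cols G) \<subseteq> carrier_vec k" using G cols_dim by blast
  have S: "S \<subseteq> set (cols G)" "vs.lin_indpt S" "card S = k"
    using mS vs.rank_card_indpt[OF G mS] rk by (auto simp: maximal_def)
  have "vs.basis S"
    using S colsc finite_subset[OF S(1)] by (intro vs.dim_li_is_basis) (auto simp: vs.dim_is_n)
  then have "carrier_vec k \<subseteq> vs.span (set (cols G))"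
    using vs.span_is_monotone[OF S(1)] by (simp add: vs.basis_def)
  moreover have "x \<in> vs.orthogonal_complement (set (cols G))"
    unfolding vs.orthogonal_complement_def
  proof (intro CollectI conjI ballI)
    fix y assume "y \<in> set (cols G)"
    then obtain j where j: "j < n" "y = col G j" using G by (auto simp: in_set_conv_nth)
    then have "x \<bullet> y = (transpose_mat G *\<^sub>v x) $ j"
      using x G by (simp add: comm_scalar_prod[of x k])
    then show "x \<bullet> y = 0" using Gx j by simp
  qed (rule x)
  ultimately have "\<forall>y\<in>carrier_vec k. x \<bullet> y = 0"
    using vs.in_orthogonal_complement_span[OF colsc] unfolding vs.orthogonal_complement_def by blast
  then show "x = 0\<^sub>v k"
    using x by (intro eq_vecI) (auto simp flip: scalar_prod_right_unit)
qed (use G in simp)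

lemma invertible_mult_iff_no_row_space_vector_in_kernel:
  fixes G A :: "'a::field mat"
  assumes G: "G \<in> carrier_mat k n" and G_inj: "trivial_kernel (transpose_mat G)"
    and A: "A \<in> carrier_mat n k"
  shows "invertible_mat (G * A) \<longleftrightarrow>
    (\<forall>c\<in>{transpose_mat G *\<^sub>v x | x. x \<in> carrier_vec k}. c \<noteq> 0\<^sub>v n \<longrightarrow> transpose_mat A *\<^sub>v c \<noteq> 0\<^sub>v k)"
proof -
  have GA: "G * A \<in> carrier_mat k k" using G A by simp
  have mult: "transpose_mat (G * A) *\<^sub>v x = transpose_mat A *\<^sub>v (transpose_mat G *\<^sub>v x)"
    if "x \<in> carrier_vec k" for x
    using transpose_mult[OF G A] G A that by simp
  have inj: "transpose_mat G *\<^sub>v x = 0\<^sub>v n \<longleftrightarrow> x = 0\<^sub>v k" if "x \<in> carrier_vec k" for x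
    using trivial_kernelD[OF G_inj _ that] G by auto
  have "invertible_mat (G * A) \<longleftrightarrow> (\<forall>x\<in>carrier_vec k. transpose_mat (G * A) *\<^sub>v x = 0\<^sub>v k \<longrightarrow> x = 0\<^sub>v k)"
    unfolding invertible_mat_iff_trivial_kernel_transpose[OF GA] trivial_kernel_def using G A by simp
  also have "\<dots> \<longleftrightarrow> (\<forall>x\<in>carrier_vec k.
      transpose_mat A *\<^sub>v (transpose_mat G *\<^sub>v x) = 0\<^sub>v k \<longrightarrow> transpose_mat G *\<^sub>v x = 0\<^sub>v n)"
    using mult inj by simp
  finally show ?thesis by blast
qed

section \<open>Linear independence over a subfield\<close>

lemma subfield_zero: "is_subfield K \<Longrightarrow> 0 \<in> K"
  and subfield_one: "is_subfield K \<Longrightarrow> 1 \<in> K"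
  and subfield_add: "is_subfield K \<Longrightarrow> x \<in> K \<Longrightarrow> y \<in> K \<Longrightarrow> x + y \<in> K"
  and subfield_mult: "is_subfield K \<Longrightarrow> x \<in> K \<Longrightarrow> y \<in> K \<Longrightarrow> x * y \<in> K"
  and subfield_uminus: "is_subfield K \<Longrightarrow> x \<in> K \<Longrightarrow> - x \<in> K"
  and subfield_inverse: "is_subfield K \<Longrightarrow> x \<in> K \<Longrightarrow> inverse x \<in> K"
  by (auto simp: is_subfield_def)

lemma subfield_divide: "is_subfield K \<Longrightarrow> x \<in> K \<Longrightarrow> y \<in> K \<Longrightarrow> x / y \<in> K"
  by (simp add: divide_inverse subfield_mult subfield_inverse)

lemma subfield_sum:
  assumes K: "is_subfield K" and f: "\<forall>x\<in>A. f x \<in> K"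
  shows "sum f A \<in> K"
proof (cases "finite A")
  case True
  then show ?thesis using f
    by (induction A rule: finite_induct) (auto intro: subfield_add[OF K] subfield_zero[OF K])
qed (simp add: subfield_zero[OF K])

definition indep_over :: "'a::field set \<Rightarrow> ('b \<Rightarrow> 'a) \<Rightarrow> 'b set \<Rightarrow> bool" where
  "indep_over K f J \<longleftrightarrow>
     (\<forall>a. (\<forall>j\<in>J. a j \<in> K) \<and> (\<Sum>j\<in>J. a j * f j) = 0 \<longrightarrow> (\<forall>j\<in>J. a j = 0))"

lemma lin_indep_over_eq_indep_over: "lin_indep_over = indep_over"
  by (intro ext) (simp add: lin_indep_over_def indep_over_def)

lemma in_span_over_if_insert_dependent:
  assumes K: "is_subfield K" and J: "finite J" "j \<notin> J"
    and indep: "indep_over K f J" and dep: "\<not> indep_over K f (insert j J)"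
  shows "\<exists>c. (\<forall>i\<in>J. c i \<in> K) \<and> f j = (\<Sum>i\<in>J. c i * f i)"
proof -
  obtain a where aK: "\<forall>i\<in>insert j J. a i \<in> K" and rel0: "(\<Sum>i\<in>insert j J. a i * f i) = 0"
    and nz: "\<exists>i\<in>insert j J. a i \<noteq> 0"
    using dep unfolding indep_over_def by blast
  have rel: "a j * f j + (\<Sum>i\<in>J. a i * f i) = 0" using rel0 J by simp
  have aj: "a j \<noteq> 0"
  proof
    assume "a j = 0"
    then have "(\<Sum>i\<in>J. a i * f i) = 0" using rel by simp
    then have "\<forall>i\<in>J. a i = 0" using indep aK unfolding indep_over_def by blast
    then show False using nz \<open>a j = 0\<close> by blast
  qed
  have "(\<Sum>i\<in>J. - a i / a j * f i) = - (\<Sum>i\<in>J. a i * f i) / a j"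
    by (simp add: sum_divide_distrib sum_negf)
  also have "\<dots> = f j"
    using rel aj by (simp add: eq_neg_iff_add_eq_0 [symmetric] field_simps)
  finally show ?thesis
    using aK by (intro exI[of _ "\<lambda>i. - a i / a j"]) (auto intro!: subfield_divide subfield_uminus K)
qed

lemma exists_basis_over_subfield:
  fixes K :: "'a::{finite,field} set"
  assumes K: "is_subfield K"
  obtains S where "indep_over K id S" "\<And>x. \<exists>\<mu>. (\<forall>b\<in>S. \<mu> b \<in> K) \<and> x = (\<Sum>b\<in>S. \<mu> b * b)"
proof -
  have "indep_over K id {}" unfolding indep_over_def by simp
  then obtain S where S: "finite S" "maximal S (indep_over K id)"
    using maximal_exists_superset[of "UNIV::'a set" "indep_over K id" "{}"] by auto
  then have indep: "indep_over K id S" by (simp add: maximal_def)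
  have "\<exists>\<mu>. (\<forall>b\<in>S. \<mu> b \<in> K) \<and> x = (\<Sum>b\<in>S. \<mu> b * b)" for x
  proof (cases "x \<in> S")
    case True
    have "(\<Sum>b\<in>S. (if b = x then 1 else 0) * b) = (\<Sum>b\<in>S. if b = x then x else 0)"
      by (rule sum.cong) auto
    then have "x = (\<Sum>b\<in>S. (if b = x then 1 else 0) * b)"
      using True S(1) by simp
    then show ?thesis
      using subfield_zero[OF K] subfield_one[OF K] by (intro exI[of _ "\<lambda>b. if b = x then 1 else 0"]) auto
  next
    case False
    then have "\<not> indep_over K id (insert x S)" using S(2) unfolding maximal_def by blast
    then show ?thesis using in_span_over_if_insert_dependent[OF K S(1) False indep] by simp
  qed
  then show ?thesis using that indep by blast
qed

text \<open>Writing the coefficients of an F-linear relation in a K-basis of F splits it into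
  K-linear relations, one for each basis element.\<close>
lemma indep_over_subfield_imp_indep:
  fixes v :: "'b \<Rightarrow> nat \<Rightarrow> 'a::{finite,field}"
  assumes K: "is_subfield K" and vK: "\<forall>t\<in>T. \<forall>r<m. v t r \<in> K"
    and indep: "\<forall>\<beta>. (\<forall>t\<in>T. \<beta> t \<in> K) \<and> (\<forall>r<m. (\<Sum>t\<in>T. \<beta> t * v t r) = 0) \<longrightarrow> (\<forall>t\<in>T. \<beta> t = 0)"
    and rel: "\<forall>r<m. (\<Sum>t\<in>T. \<alpha> t * v t r) = 0"
  shows "\<forall>t\<in>T. \<alpha> t = 0"
proof -
  obtain S where S: "indep_over K id S" and "\<forall>x. \<exists>\<mu>. (\<forall>b\<in>S. \<mu> b \<in> K) \<and> x = (\<Sum>b\<in>S. \<mu> b * b)"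
    using exists_basis_over_subfield[OF K] by metis
  then obtain coord where coordK: "\<And>x b. b \<in> S \<Longrightarrow> coord x b \<in> K"
    and coord: "\<And>x. x = (\<Sum>b\<in>S. coord x b * b)"
    by metis
  have "\<forall>t\<in>T. coord (\<alpha> t) b = 0" if b: "b \<in> S" for b
  proof -
    have "(\<Sum>t\<in>T. coord (\<alpha> t) b * v t r) = 0" if r: "r < m" for r
    proof -
      have "0 = (\<Sum>t\<in>T. (\<Sum>b\<in>S. coord (\<alpha> t) b * b) * v t r)"
        using rel r by (subst (asm) coord) simp
      also have "\<dots> = (\<Sum>b\<in>S. (\<Sum>t\<in>T. coord (\<alpha> t) b * v t r) * b)"
        by (simp add: sum_distrib_right sum_distrib_left mult_ac) (rule sum.swap)
      finally have "(\<Sum>b\<in>S. (\<Sum>t\<in>T. coord (\<alpha> t) b * v t r) * id b) = 0" by simp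
      moreover have "\<forall>b\<in>S. (\<Sum>t\<in>T. coord (\<alpha> t) b * v t r) \<in> K"
        using coordK vK r by (auto intro!: subfield_sum subfield_mult K)
      ultimately show ?thesis
        using S[unfolded indep_over_def, THEN spec[of _ "\<lambda>b'. \<Sum>t\<in>T. coord (\<alpha> t) b' * v t r"]] b
        by blast
    qed
    then show ?thesis using indep[THEN spec[of _ "\<lambda>t. coord (\<alpha> t) b"]] coordK b by blast
  qed
  then show ?thesis by (subst coord) simp
qed

text \<open>Padding the p vectors of length m < p with zero entries gives a square matrix with a zero
  row, hence a singular one.\<close>
lemma exists_nontrivial_relation_if_card_gt:
  fixes v :: "'b \<Rightarrow> nat \<Rightarrow> 'a::field"
  assumes fin: "finite T" and gt: "card T > m"
  shows "\<exists>\<alpha>. (\<forall>r<m. (\<Sum>t\<in>T. \<alpha> t * v t r) = 0) \<and> (\<exists>t\<in>T. \<alpha> t \<noteq> 0)"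
proof -
  define p where "p = card T"
  obtain h where h: "bij_betw h {0..<p} T" using ex_bij_betw_nat_finite[OF fin] p_def by blast
  define M where "M = mat p p (\<lambda>(r,s). if r < m then v (h s) r else (0::'a))"
  have M: "M \<in> carrier_mat p p" by (simp add: M_def)
  have p0: "p - 1 < p" "m \<le> p - 1" using gt p_def by auto
  have "transpose_mat M *\<^sub>v unit_vec p (p - 1) = 0\<^sub>v p"
    using p0 by (intro eq_vecI) (auto simp: M_def scalar_prod_def unit_vec_def)
  moreover have "unit_vec p (p - 1) \<noteq> 0\<^sub>v p"
    using p0 by (metis index_unit_vec(1) index_zero_vec(1) one_neq_zero)
  ultimately have "\<exists>v. v \<in> carrier_vec p \<and> v \<noteq> 0\<^sub>v p \<and> transpose_mat M *\<^sub>v v = 0\<^sub>v p"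
    using unit_vec_carrier by blast
  then have "det (transpose_mat M) = 0"
    using det_0_iff_vec_prod_zero_field[of "transpose_mat M" p] M by auto
  then have "det M = 0" using det_transpose[OF M] by simp
  then obtain w where w: "w \<in> carrier_vec p" "w \<noteq> 0\<^sub>v p" "M *\<^sub>v w = 0\<^sub>v p"
    using det_0_iff_vec_prod_zero_field[OF M] by auto
  define \<alpha> where "\<alpha> t = w $ (the_inv_into {0..<p} h t)" for t
  have ah: "\<alpha> (h s) = w $ s" if "s < p" for s
    using h that unfolding \<alpha>_def by (simp add: bij_betw_def the_inv_into_f_f)
  have "(\<Sum>t\<in>T. \<alpha> t * v t r) = 0" if r: "r < m" for r
  proof -
    have "(\<Sum>t\<in>T. \<alpha> t * v t r) = (\<Sum>s\<in>{0..<p}. \<alpha> (h s) * v (h s) r)"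
      using sum.reindex_bij_betw[OF h, of "\<lambda>t. \<alpha> t * v t r"] by simp
    also have "\<dots> = (M *\<^sub>v w) $ r"
      using r p0 w(1) by (auto simp: M_def scalar_prod_def ah mult.commute intro!: sum.cong)
    also have "\<dots> = 0" using w(3) r p0 by simp
    finally show ?thesis .
  qed
  moreover have "\<exists>t\<in>T. \<alpha> t \<noteq> 0"
  proof (rule ccontr)
    assume "\<not> ?thesis"
    then have "w $ s = 0" if "s < p" for s using ah[OF that] h that by (auto simp: bij_betw_def)
    then have "w = 0\<^sub>v p" using w(1) by (intro eq_vecI) auto
    then show False using w(2) by simp
  qed
  ultimately show ?thesis by blast
qed

lemma card_le_if_indep_over_subfield:
  fixes v :: "'b \<Rightarrow> nat \<Rightarrow> 'a::{finite,field}"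
  assumes K: "is_subfield K" and fin: "finite T" and vK: "\<forall>t\<in>T. \<forall>r<m. v t r \<in> K"
    and ind: "\<forall>\<beta>. (\<forall>t\<in>T. \<beta> t \<in> K) \<and> (\<forall>r<m. (\<Sum>t\<in>T. \<beta> t * v t r) = 0) \<longrightarrow> (\<forall>t\<in>T. \<beta> t = 0)"
  shows "card T \<le> m"
proof (rule ccontr)
  assume "\<not> card T \<le> m"
  then obtain \<alpha> where "\<forall>r<m. (\<Sum>t\<in>T. \<alpha> t * v t r) = 0" "\<exists>t\<in>T. \<alpha> t \<noteq> 0"
    using exists_nontrivial_relation_if_card_gt[OF fin, of m v] by auto
  then show False using indep_over_subfield_imp_indep[OF K vK ind] by blast
qed

section \<open>Rank over a subfield and annihilating matrices\<close>

lemma finite_rank_over_candidates: "finite {card J | J. J \<subseteq> {..<m} \<and> lin_indep_over K f J}"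
proof (rule finite_subset[of _ "{..m}"])
  show "{card J | J. J \<subseteq> {..<m} \<and> lin_indep_over K f J} \<subseteq> {..m}"
    using card_mono[OF finite_lessThan, of _ m] by fastforce
qed simp

lemma rank_over_attained:
  obtains J where "J \<subseteq> {..<m}" "lin_indep_over K f J" "card J = rank_over K f m"
proof -
  have "lin_indep_over K f {}" by (simp add: lin_indep_over_def)
  then have "{card J | J. J \<subseteq> {..<m} \<and> lin_indep_over K f J} \<noteq> {}" by blast
  then have "rank_over K f m \<in> {card J | J. J \<subseteq> {..<m} \<and> lin_indep_over K f J}"
    unfolding rank_over_def by (rule Max_in[OF finite_rank_over_candidates])
  then obtain J where "rank_over K f m = card J" "J \<subseteq> {..<m}" "lin_indep_over K f J"
    unfolding mem_Collect_eq by (elim exE conjE)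
  then show ?thesis using that by simp
qed

lemma card_le_rank_over: "J \<subseteq> {..<m} \<Longrightarrow> lin_indep_over K f J \<Longrightarrow> card J \<le> rank_over K f m"
  unfolding rank_over_def by (rule Max_ge[OF finite_rank_over_candidates]) blast

lemma rank_over_le: "rank_over K f m \<le> m"
proof -
  obtain J where J: "J \<subseteq> {..<m}" "lin_indep_over K f J" "card J = rank_over K f m"
    by (rule rank_over_attained)
  have "card J \<le> card {..<m}" using J(1) by (intro card_mono) simp_all
  then show ?thesis using J(3) by simp
qed

lemma rank_over_le_card_nonzero:
  assumes K: "is_subfield K"
  shows "rank_over K f m \<le> card {j. j < m \<and> f j \<noteq> 0}"
proof -
  obtain J where J: "J \<subseteq> {..<m}" "lin_indep_over K f J" "card J = rank_over K f m"
    by (rule rank_over_attained)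
  have "f j \<noteq> 0" if j: "j \<in> J" for j
  proof
    assume f0: "f j = 0"
    let ?a = "\<lambda>i. if i = j then 1 else (0::'a)"
    have "(\<Sum>i\<in>J. ?a i * f i) = 0" by (rule sum.neutral) (auto simp: f0)
    moreover have "\<forall>i\<in>J. ?a i \<in> K" using subfield_zero[OF K] subfield_one[OF K] by auto
    ultimately have "?a j = 0" using J(2)[unfolded lin_indep_over_def, THEN spec[of _ ?a]] j by blast
    then show False by simp
  qed
  then have "J \<subseteq> {j. j < m \<and> f j \<noteq> 0}" using J(1) by auto
  then have "card J \<le> card {j. j < m \<and> f j \<noteq> 0}" by (intro card_mono) simp_all
  then show ?thesis using J(3) by simp
qed

lemma transpose_mult_vec_index:
  assumes "A \<in> carrier_mat m p" "t < p"
  shows "(transpose_mat A *\<^sub>v vec m f) $ t = (\<Sum>r<m. A $$ (r, t) * f r)"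
  using assms by (simp add: scalar_prod_def atLeast0LessThan)

text \<open>Pairing with f kills the first summand, the K-independence of f on J then kills the
  second, and the trivial kernel of Bm the rest.\<close>
lemma mult_vec_add_coords_eq_0_imp_zero:
  fixes f :: "nat \<Rightarrow> 'a::field"
  assumes Bm: "Bm \<in> carrier_mat m p" and inj: "trivial_kernel Bm"
    and ann: "transpose_mat Bm *\<^sub>v vec m f = 0\<^sub>v p"
    and J: "J \<subseteq> {..<m}" "lin_indep_over K f J" and \<delta>K: "\<forall>j\<in>J. \<delta> j \<in> K" and w: "w \<in> carrier_vec p"
    and rel: "\<And>r. r < m \<Longrightarrow> (Bm *\<^sub>v w) $ r + (if r \<in> J then \<delta> r else 0) = 0"
  shows "w = 0\<^sub>v p \<and> (\<forall>j\<in>J. \<delta> j = 0)"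
proof -
  have ann': "(\<Sum>r<m. Bm $$ (r, t) * f r) = 0" if "t < p" for t
    using ann that transpose_mult_vec_index[OF Bm that, of f] by simp
  have "(\<Sum>r<m. f r * (Bm *\<^sub>v w) $ r) = (\<Sum>t<p. w $ t * (\<Sum>r<m. Bm $$ (r, t) * f r))"
    using Bm w by (simp add: scalar_prod_def atLeast0LessThan sum_distrib_left mult_ac sum.swap[of _ "{..<m}"])
  also have "\<dots> = 0" using ann' by simp
  finally have paired: "(\<Sum>r<m. f r * (Bm *\<^sub>v w) $ r) = 0" .
  have "(\<Sum>j\<in>J. \<delta> j * f j) = (\<Sum>r<m. if r \<in> J then \<delta> r * f r else 0)"
    using J(1) by (simp add: sum.inter_restrict[symmetric] Int_absorb1)
  also have "\<dots> = (\<Sum>r<m. - (f r * (Bm *\<^sub>v w) $ r))"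
  proof (rule sum.cong[OF refl])
    fix r assume "r \<in> {..<m}"
    then show "(if r \<in> J then \<delta> r * f r else 0) = - (f r * (Bm *\<^sub>v w) $ r)"
      using rel[of r] by (cases "r \<in> J") (auto simp: add_eq_0_iff)
  qed
  also have "\<dots> = 0" using paired by (simp add: sum_negf)
  finally have "(\<Sum>j\<in>J. \<delta> j * f j) = 0" .
  then have \<delta>0: "\<forall>j\<in>J. \<delta> j = 0" using J(2) \<delta>K unfolding lin_indep_over_def by blast
  then have "(Bm *\<^sub>v w) $ r = 0" if "r < m" for r using rel[OF that] by (cases "r \<in> J") auto
  then have "Bm *\<^sub>v w = 0\<^sub>v m" using Bm by (intro eq_vecI) auto
  then show ?thesis using trivial_kernelD[OF inj Bm w] \<delta>0 by simp
qed

text \<open>The columns of Bm together with the unit vectors indexed by a maximal K-independent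
  subfamily of f are K-independent vectors of K^m.\<close>
lemma rank_over_add_le_if_annihilated:
  fixes f :: "nat \<Rightarrow> 'a::{finite,field}"
  assumes K: "is_subfield K" and Bm: "Bm \<in> carrier_mat m p"
    and BK: "\<forall>r<m. \<forall>t<p. Bm $$ (r, t) \<in> K" and inj: "trivial_kernel Bm"
    and ann: "transpose_mat Bm *\<^sub>v vec m f = 0\<^sub>v p"
  shows "rank_over K f m + p \<le> m"
proof -
  obtain J where J: "J \<subseteq> {..<m}" "lin_indep_over K f J" "card J = rank_over K f m"
    by (rule rank_over_attained)
  have finJ: "finite J" using J(1) finite_subset by blast
  define T :: "(nat + nat) set" where "T = Inl ` {..<p} \<union> Inr ` J"
  define v where "v x r = (case x of Inl t \<Rightarrow> Bm $$ (r, t) | Inr j \<Rightarrow> (if r = j then 1 else 0))" for x r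
  have sumT: "(\<Sum>x\<in>T. g x) = (\<Sum>t<p. g (Inl t)) + (\<Sum>j\<in>J. g (Inr j))" for g :: "nat + nat \<Rightarrow> 'a"
    unfolding T_def by (subst sum.union_disjoint) (auto simp: finJ sum.reindex)
  have "\<forall>x\<in>T. \<beta> x = 0"
    if \<beta>K: "\<forall>x\<in>T. \<beta> x \<in> K" and rel: "\<forall>r<m. (\<Sum>x\<in>T. \<beta> x * v x r) = 0" for \<beta>
  proof -
    define w where "w = vec p (\<lambda>t. \<beta> (Inl t))"
    have "(Bm *\<^sub>v w) $ r + (if r \<in> J then \<beta> (Inr r) else 0) = 0" if r: "r < m" for r
    proof -
      have "(\<Sum>j\<in>J. \<beta> (Inr j) * (if r = j then 1 else 0)) = (\<Sum>j\<in>J. if r = j then \<beta> (Inr j) else 0)"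
        by (rule sum.cong) auto
      then have delta: "(\<Sum>j\<in>J. \<beta> (Inr j) * (if r = j then 1 else 0)) = (if r \<in> J then \<beta> (Inr r) else 0)"
        using finJ by simp
      have "(\<Sum>x\<in>T. \<beta> x * v x r) = 0" using rel r by blast
      then show ?thesis
        using r Bm by (simp add: sumT v_def w_def delta scalar_prod_def atLeast0LessThan mult.commute)
    qed
    moreover have "\<forall>j\<in>J. \<beta> (Inr j) \<in> K" using \<beta>K by (simp add: T_def)
    ultimately have "w = 0\<^sub>v p" "\<forall>j\<in>J. \<beta> (Inr j) = 0"
      using mult_vec_add_coords_eq_0_imp_zero[OF Bm inj ann J(1,2), of "\<lambda>j. \<beta> (Inr j)" w] by (auto simp: w_def)
    moreover have "\<beta> (Inl t) = 0" if "t < p" "w = 0\<^sub>v p" for t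
      using that unfolding w_def by (metis index_vec index_zero_vec(1))
    ultimately show ?thesis by (auto simp: T_def)
  qed
  moreover have "\<forall>x\<in>T. \<forall>r<m. v x r \<in> K"
    using BK subfield_zero[OF K] subfield_one[OF K] by (auto simp: T_def v_def)
  moreover have "finite T" using finJ by (simp add: T_def)
  moreover have "card T = p + card J"
    unfolding T_def by (subst card_Un_disjoint) (auto simp: finJ card_image)
  ultimately show ?thesis using card_le_if_indep_over_subfield[OF K, of T m v] J(3) by auto
qed

lemma in_span_over_if_not_in_maximal:
  assumes K: "is_subfield K" and J: "J \<subseteq> {..<m}" "lin_indep_over K f J" "card J = rank_over K f m"
    and j: "j < m" "j \<notin> J"
  shows "\<exists>c. (\<forall>i\<in>J. c i \<in> K) \<and> f j = (\<Sum>i\<in>J. c i * f i)"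
proof (rule in_span_over_if_insert_dependent[OF K _ j(2)])
  show finJ: "finite J" using J(1) finite_subset by blast
  show "indep_over K f J" using J(2) by (simp add: lin_indep_over_eq_indep_over)
  show "\<not> indep_over K f (insert j J)"
  proof
    assume "indep_over K f (insert j J)"
    then have "card (insert j J) \<le> rank_over K f m"
      using J(1) j by (intro card_le_rank_over) (auto simp: lin_indep_over_eq_indep_over)
    then show False using J(3) j finJ by simp
  qed
qed

lemma trivial_kernel_if_identity_rows:
  assumes Bm: "Bm \<in> carrier_mat m q" and e: "\<And>t. t < q \<Longrightarrow> e t < m"
    and id: "\<And>t t'. t < q \<Longrightarrow> t' < q \<Longrightarrow> Bm $$ (e t, t') = (if t' = t then 1 else 0)"
  shows "trivial_kernel Bm"
proof (rule trivial_kernelI[OF Bm])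
  fix w assume w: "w \<in> carrier_vec q" and Bw: "Bm *\<^sub>v w = 0\<^sub>v m"
  have "w $ t = 0" if t: "t < q" for t
  proof -
    have "(Bm *\<^sub>v w) $ e t = (\<Sum>t'<q. Bm $$ (e t, t') * w $ t')"
      using Bm w e[OF t] by (simp add: scalar_prod_def atLeast0LessThan)
    also have "\<dots> = (\<Sum>t'<q. if t' = t then w $ t' else 0)"
      using t id by (intro sum.cong refl) auto
    also have "\<dots> = w $ t" using t by simp
    finally show ?thesis using Bw e[OF t] by simp
  qed
  then show "w = 0\<^sub>v q" using w by (intro eq_vecI) auto
qed

text \<open>The columns are the coefficient vectors of the K-linear relations expressing the entries of
  f outside a maximal K-independent subfamily through that subfamily.\<close>
lemma exists_annihilating_mat_over:
  fixes f :: "nat \<Rightarrow> 'a::field"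
  assumes K: "is_subfield K" and q: "q \<le> m - rank_over K f m"
  obtains Bm where "Bm \<in> carrier_mat m q" "\<forall>r<m. \<forall>t<q. Bm $$ (r, t) \<in> K" "trivial_kernel Bm"
    "transpose_mat Bm *\<^sub>v vec m f = 0\<^sub>v q"
proof -
  obtain J where J: "J \<subseteq> {..<m}" "lin_indep_over K f J" "card J = rank_over K f m"
    by (rule rank_over_attained)
  have finJ: "finite J" using J(1) finite_subset by blast
  define D where "D = {..<m} - J"
  obtain L where L: "\<And>j. j \<in> D \<Longrightarrow> (\<forall>i\<in>J. L j i \<in> K) \<and> f j = (\<Sum>i\<in>J. L j i * f i)"
    using in_span_over_if_not_in_maximal[OF K J] unfolding D_def by (metis DiffE lessThan_iff)
  have "card D = m - rank_over K f m"
    unfolding D_def using J by (simp add: card_Diff_subset finJ)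
  then obtain e where e: "bij_betw e {0..<m - rank_over K f m} D"
    using ex_bij_betw_nat_finite[of D] by (metis D_def finite_Diff finite_lessThan)
  have eD: "e t \<in> D" if "t < q" for t using e q that by (auto simp: bij_betw_def)
  have einj: "e t = e t' \<Longrightarrow> t = t'" if "t < q" "t' < q" for t t'
    using e q that unfolding bij_betw_def inj_on_def by auto
  define Bm where "Bm = mat m q (\<lambda>(r, t). if r = e t then 1 else if r \<in> J then - L (e t) r else 0)"
  have Bm: "Bm \<in> carrier_mat m q" by (simp add: Bm_def)
  have "\<forall>r<m. \<forall>t<q. Bm $$ (r, t) \<in> K"
    using L eD subfield_zero[OF K] subfield_one[OF K] subfield_uminus[OF K] by (auto simp: Bm_def)
  moreover have "trivial_kernel Bm"
    using eD einj by (intro trivial_kernel_if_identity_rows[OF Bm, of e]) (auto simp: Bm_def D_def)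
  moreover have "transpose_mat Bm *\<^sub>v vec m f = 0\<^sub>v q"
  proof (rule eq_vecI)
    fix t assume "t < dim_vec (0\<^sub>v q :: 'a vec)"
    then have t: "t < q" by simp
    have et: "e t < m" "e t \<notin> J" using eD[OF t] by (auto simp: D_def)
    have "(transpose_mat Bm *\<^sub>v vec m f) $ t = (\<Sum>r<m. Bm $$ (r, t) * f r)"
      by (rule transpose_mult_vec_index[OF Bm t])
    also have "\<dots> = (\<Sum>r<m. (if r = e t then f r else 0) + (if r \<in> J then - (L (e t) r * f r) else 0))"
      using t et by (intro sum.cong refl) (auto simp: Bm_def)
    also have "\<dots> = f (e t) + (\<Sum>r\<in>{..<m} \<inter> J. - (L (e t) r * f r))"
      unfolding sum.distrib using et by (simp add: sum.inter_restrict)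
    also have "{..<m} \<inter> J = J" using J(1) by blast
    also have "f (e t) + (\<Sum>r\<in>J. - (L (e t) r * f r)) = 0"
      using L[OF eD[OF t]] by (simp add: sum_negf)
    finally show "(transpose_mat Bm *\<^sub>v vec m f) $ t = 0\<^sub>v q $ t" using t by simp
  qed (use Bm in simp)
  ultimately show ?thesis using that Bm by blast
qed

section \<open>Sum-rank weight and block-diagonal annihilators\<close>

lemma exists_bounded_summands:
  "k \<le> (\<Sum>i<(l::nat). d i) \<Longrightarrow> \<exists>ks. (\<forall>i<l. ks i \<le> (d i::nat)) \<and> (\<Sum>i<l. ks i) = k"
proof (induction l arbitrary: k)
  case 0 then show ?case by simp
next
  case (Suc l)
  define k' where "k' = min k (\<Sum>i<l. d i)"
  obtain ks where ks: "\<forall>i<l. ks i \<le> d i" "(\<Sum>i<l. ks i) = k'"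
    using Suc.IH[of k'] by (auto simp: k'_def)
  define ks' where "ks' = ks(l := k - k')"
  have "(\<Sum>i<l. ks' i) = (\<Sum>i<l. ks i)" by (intro sum.cong) (auto simp: ks'_def)
  then have "(\<Sum>i<Suc l. ks' i) = k" using ks by (simp add: ks'_def k'_def)
  moreover have "\<forall>i<Suc l. ks' i \<le> d i" using ks Suc.prems by (auto simp: ks'_def k'_def less_Suc_eq)
  ultimately show ?case by blast
qed

definition blocks_over ::
  "nat \<Rightarrow> (nat \<Rightarrow> nat) \<Rightarrow> (nat \<Rightarrow> 'a set) \<Rightarrow> (nat \<Rightarrow> nat) \<Rightarrow> (nat \<Rightarrow> 'a mat) \<Rightarrow> bool" where
  "blocks_over l nn K ks B \<longleftrightarrow>
     (\<forall>i<l. ks i \<le> nn i \<and> B i \<in> carrier_mat (nn i) (ks i) \<and> (\<forall>r<nn i. \<forall>c<ks i. B i $$ (r, c) \<in> K i))"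

lemma rank_block_diag_eq_iff:
  assumes "\<forall>i<l. B i \<in> carrier_mat (nn i) (ks i)"
  shows "vec_space.rank (offs nn l) (block_diag l nn ks B) = offs ks l \<longleftrightarrow> (\<forall>i<l. trivial_kernel (B i))"
  unfolding rank_eq_dim_col_iff_trivial_kernel[OF block_diag_carrier] by (rule trivial_kernel_block_diag_iff[OF assms])

lemma transpose_block_diag_mult_eq_0_iff:
  assumes B: "\<forall>i<l. B i \<in> carrier_mat (nn i) (ks i)" and c: "c \<in> carrier_vec (offs nn l)"
  shows "transpose_mat (block_diag l nn ks B) *\<^sub>v c = 0\<^sub>v (offs ks l) \<longleftrightarrow>
    (\<forall>i<l. transpose_mat (B i) *\<^sub>v block_vec nn i c = 0\<^sub>v (ks i))"
proof -
  have "transpose_mat (block_diag l nn ks B) *\<^sub>v c \<in> carrier_vec (offs ks l)"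
    using block_diag_carrier[of l nn ks B] by (simp add: carrier_vecI)
  moreover have "block_vec ks i (transpose_mat (block_diag l nn ks B) *\<^sub>v c)
      = transpose_mat (B i) *\<^sub>v block_vec nn i c" if "i < l" for i
    using block_vec_transpose_block_diag_mult[OF that _ c] B that by blast
  ultimately show ?thesis by (simp add: eq_0_iff_block_vecs_eq_0)
qed

lemma annihilating_block_diag_iff:
  assumes B: "blocks_over l nn K ks B" and ks: "(\<Sum>i<l. ks i) = k" and c: "c \<in> carrier_vec (offs nn l)"
  shows "vec_space.rank (offs nn l) (block_diag l nn ks B) = k \<and> transpose_mat (block_diag l nn ks B) *\<^sub>v c = 0\<^sub>v k
    \<longleftrightarrow> (\<forall>i<l. trivial_kernel (B i) \<and> transpose_mat (B i) *\<^sub>v block_vec nn i c = 0\<^sub>v (ks i))"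
proof -
  have "offs ks l = k" using ks by (simp add: offs_def)
  moreover have "\<forall>i<l. B i \<in> carrier_mat (nn i) (ks i)" using B by (simp add: blocks_over_def)
  ultimately show ?thesis
    using rank_block_diag_eq_iff[of l B nn ks] transpose_block_diag_mult_eq_0_iff[of l B nn ks c] c by auto
qed

lemma srank_add_le_iff_annihilated_by_block_diag:
  fixes c :: "'a::{finite,field} vec"
  assumes K: "\<forall>i<l. is_subfield (K i)" and c: "c \<in> carrier_vec (offs nn l)"
  shows "srank l nn K c + k \<le> offs nn l \<longleftrightarrow>
    (\<exists>ks B. blocks_over l nn K ks B \<and> (\<Sum>i<l. ks i) = k
       \<and> vec_space.rank (offs nn l) (block_diag l nn ks B) = k
       \<and> transpose_mat (block_diag l nn ks B) *\<^sub>v c = 0\<^sub>v k)"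
proof -
  define \<rho> where "\<rho> i = rank_over (K i) (\<lambda>j. c $ (offs nn i + j)) (nn i)" for i
  have srank: "srank l nn K c = (\<Sum>i<l. \<rho> i)" by (simp add: srank_def \<rho>_def)
  have nn: "offs nn l = (\<Sum>i<l. nn i)" by (simp add: offs_def)
  show ?thesis
  proof
    assume "srank l nn K c + k \<le> offs nn l"
    moreover have "(\<Sum>i<l. nn i - \<rho> i) = (\<Sum>i<l. nn i) - (\<Sum>i<l. \<rho> i)"
      by (rule sum_subtractf_nat) (simp add: \<rho>_def rank_over_le)
    ultimately have "k \<le> (\<Sum>i<l. nn i - \<rho> i)" using srank nn by linarith
    then obtain ks where ks: "\<forall>i<l. ks i \<le> nn i - \<rho> i" "(\<Sum>i<l. ks i) = k"
      using exists_bounded_summands by blast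
    have "\<forall>i. \<exists>Bm. i < l \<longrightarrow> Bm \<in> carrier_mat (nn i) (ks i) \<and> (\<forall>r<nn i. \<forall>t<ks i. Bm $$ (r, t) \<in> K i)
        \<and> trivial_kernel Bm \<and> transpose_mat Bm *\<^sub>v block_vec nn i c = 0\<^sub>v (ks i)"
      using exists_annihilating_mat_over K ks(1) unfolding \<rho>_def block_vec_def by metis
    then obtain B where B: "\<forall>i<l. B i \<in> carrier_mat (nn i) (ks i) \<and> (\<forall>r<nn i. \<forall>t<ks i. B i $$ (r, t) \<in> K i)
        \<and> trivial_kernel (B i) \<and> transpose_mat (B i) *\<^sub>v block_vec nn i c = 0\<^sub>v (ks i)"
      by metis
    then have "blocks_over l nn K ks B" using ks(1) by (auto simp: blocks_over_def)
    then show "\<exists>ks B. blocks_over l nn K ks B \<and> (\<Sum>i<l. ks i) = k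
       \<and> vec_space.rank (offs nn l) (block_diag l nn ks B) = k
       \<and> transpose_mat (block_diag l nn ks B) *\<^sub>v c = 0\<^sub>v k"
      using annihilating_block_diag_iff[OF _ ks(2) c] B ks(2) by blast
  next
    assume "\<exists>ks B. blocks_over l nn K ks B \<and> (\<Sum>i<l. ks i) = k
       \<and> vec_space.rank (offs nn l) (block_diag l nn ks B) = k
       \<and> transpose_mat (block_diag l nn ks B) *\<^sub>v c = 0\<^sub>v k"
    then obtain ks B where B: "blocks_over l nn K ks B" and ks: "(\<Sum>i<l. ks i) = k"
      and ann: "\<forall>i<l. trivial_kernel (B i) \<and> transpose_mat (B i) *\<^sub>v block_vec nn i c = 0\<^sub>v (ks i)"
      using annihilating_block_diag_iff[OF _ _ c] by blast
    have "\<rho> i + ks i \<le> nn i" if "i < l" for i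
      unfolding \<rho>_def using B ann K that
      by (intro rank_over_add_le_if_annihilated[where Bm = "B i"]) (auto simp: blocks_over_def block_vec_def)
    then have "(\<Sum>i<l. \<rho> i + ks i) \<le> (\<Sum>i<l. nn i)" by (intro sum_mono) auto
    then show "srank l nn K c + k \<le> offs nn l" using srank nn ks by (simp add: sum.distrib)
  qed
qed

section \<open>The Singleton bound\<close>

lemma card_Collect_less_eq_sum: "card {r. r < (m::nat) \<and> P r} = (\<Sum>r<m. if P r then 1 else 0)"
proof -
  have "card {r. r < m \<and> P r} = (\<Sum>r\<in>{r \<in> {..<m}. P r}. 1)" by (simp add: lessThan_def)
  also have "\<dots> = (\<Sum>r<m. if P r then 1 else 0)" by (rule sum.inter_filter) simp
  finally show ?thesis .
qed

lemma srank_le_card_nonzero: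
  assumes K: "\<forall>i<l. is_subfield (K i)"
  shows "srank l nn K c \<le> card {s. s < offs nn l \<and> c $ s \<noteq> 0}"
proof -
  have "srank l nn K c \<le> (\<Sum>i<l. card {r. r < nn i \<and> c $ (offs nn i + r) \<noteq> 0})"
    unfolding srank_def using K by (intro sum_mono rank_over_le_card_nonzero) auto
  also have "\<dots> = (\<Sum>s<offs nn l. if c $ s \<noteq> 0 then 1 else 0)"
    by (simp only: card_Collect_less_eq_sum sum_lessThan_offs)
  also have "\<dots> = card {s. s < offs nn l \<and> c $ s \<noteq> 0}"
    by (simp only: card_Collect_less_eq_sum)
  finally show ?thesis .
qed

lemma srank_le: "srank l nn K c \<le> offs nn l"
  unfolding srank_def offs_def by (intro sum_mono rank_over_le)

lemma exists_row_combination_vanishing_on_prefix: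
  fixes G :: "'a::field mat"
  assumes G: "G \<in> carrier_mat k n" and k: "1 \<le> k" "k \<le> n"
  obtains x where "x \<in> carrier_vec k" "x \<noteq> 0\<^sub>v k" "\<forall>j<k - 1. (transpose_mat G *\<^sub>v x) $ j = 0"
proof -
  obtain \<alpha> where \<alpha>: "\<forall>j<k - 1. (\<Sum>t\<in>{..<k}. \<alpha> t * G $$ (t, j)) = 0" "\<exists>t\<in>{..<k}. \<alpha> t \<noteq> 0"
    using exists_nontrivial_relation_if_card_gt[of "{..<k}" "k - 1" "\<lambda>t j. G $$ (t, j)"] k by auto
  have "(transpose_mat G *\<^sub>v vec k \<alpha>) $ j = 0" if "j < k - 1" for j
    using \<alpha>(1) that G k by (simp add: scalar_prod_def atLeast0LessThan mult.commute)
  moreover have "vec k \<alpha> \<noteq> 0\<^sub>v k" using \<alpha>(2) by (metis index_vec index_zero_vec(1) lessThan_iff)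
  ultimately show ?thesis using that[of "vec k \<alpha>"] by simp
qed

text \<open>A nonzero codeword vanishing on the first k - 1 coordinates has Hamming
  weight, hence sum-rank weight, at most n - k + 1.\<close>
lemma exists_codeword_srank_le:
  fixes G :: "'a::{finite,field} mat"
  assumes K: "\<forall>i<l. is_subfield (K i)" and G: "G \<in> carrier_mat k (offs nn l)"
    and G_inj: "trivial_kernel (transpose_mat G)" and k: "1 \<le> k" "k \<le> offs nn l"
  obtains x where "x \<in> carrier_vec k" "transpose_mat G *\<^sub>v x \<noteq> 0\<^sub>v (offs nn l)"
    "srank l nn K (transpose_mat G *\<^sub>v x) \<le> offs nn l - k + 1"
proof -
  obtain x where x: "x \<in> carrier_vec k" "x \<noteq> 0\<^sub>v k" "\<forall>j<k - 1. (transpose_mat G *\<^sub>v x) $ j = 0"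
    by (rule exists_row_combination_vanishing_on_prefix[OF G k])
  let ?c = "transpose_mat G *\<^sub>v x"
  have "?c \<noteq> 0\<^sub>v (offs nn l)" using trivial_kernelD[OF G_inj _ x(1)] G x(2) by auto
  moreover have "{s. s < offs nn l \<and> ?c $ s \<noteq> 0} \<subseteq> {k - 1..<offs nn l}"
    using x(3) by (auto simp: not_less)
  then have "srank l nn K ?c \<le> card {k - 1..<offs nn l}"
    using srank_le_card_nonzero[OF K, of nn ?c] card_mono[OF finite_atLeastLessThan] by (meson le_trans)
  ultimately show ?thesis using that x(1) k by simp
qed

lemma MSRD_iff_srank_lower_bound:
  fixes G :: "'a::{finite,field} mat"
  assumes K: "\<forall>i<l. is_subfield (K i)" and n: "n = offs nn l"
    and G: "G \<in> carrier_mat k n" and G_inj: "trivial_kernel (transpose_mat G)" and k: "1 \<le> k" "k \<le> n"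
    and C: "C = {transpose_mat G *\<^sub>v x | x. x \<in> carrier_vec k}"
  shows "MSRD l nn K n k C \<longleftrightarrow> (\<forall>c\<in>C. c \<noteq> 0\<^sub>v n \<longrightarrow> n < srank l nn K c + k)"
proof -
  define S where "S = {srank l nn K c | c. c \<in> C \<and> c \<noteq> 0\<^sub>v n}"
  have fin: "finite S" by (rule finite_subset[of _ "{..n}"]) (auto simp: S_def n srank_le)
  obtain x where "x \<in> carrier_vec k" "transpose_mat G *\<^sub>v x \<noteq> 0\<^sub>v n"
    "srank l nn K (transpose_mat G *\<^sub>v x) \<le> n - k + 1"
    using exists_codeword_srank_le[OF K _ G_inj] G k n by metis
  then obtain s where s: "s \<in> S" "s \<le> n - k + 1" unfolding S_def C by blast
  have "MSRD l nn K n k C \<longleftrightarrow> Min S = n - k + 1"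
    by (simp add: MSRD_def min_srank_dist_def S_def)
  also have "\<dots> \<longleftrightarrow> (\<forall>s\<in>S. n - k + 1 \<le> s)"
    using Min_le[OF fin] Min_in[OF fin] s by (metis empty_iff le_antisym le_trans)
  also have "\<dots> \<longleftrightarrow> (\<forall>c\<in>C. c \<noteq> 0\<^sub>v n \<longrightarrow> n < srank l nn K c + k)"
    using k by (auto simp: S_def)
  finally show ?thesis .
qed

theorem mainTheorem1:
  fixes l k n :: nat and nn :: "nat \<Rightarrow> nat" and K :: "nat \<Rightarrow> 'a::{finite,field} set"
    and G :: "'a mat" and C :: "'a vec set"
  assumes "l > 0"
    and "\<forall>i<l. nn i > 0"
    and "\<forall>i<l. is_subfield (K i)"
    and "n = (\<Sum>i<l. nn i)"
    and "k \<ge> 1"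
    and "G \<in> carrier_mat k n"
    and "vec_space.rank k G = k"
    and "C = {transpose_mat G *\<^sub>v x | x. x \<in> carrier_vec k}"
  shows "MSRD l nn K n k C \<longleftrightarrow>
    (\<forall>ks B. (\<forall>i<l. ks i \<le> nn i \<and> B i \<in> carrier_mat (nn i) (ks i) \<and>
                    (\<forall>r<nn i. \<forall>c<ks i. B i $$ (r, c) \<in> K i))
           \<and> (\<Sum>i<l. ks i) = k
           \<and> vec_space.rank n (block_diag l nn ks B) = k
        \<longrightarrow> invertible_mat (G * block_diag l nn ks B))"
proof -
  have n: "n = offs nn l" using assms(4) by (simp add: offs_def)
  have G_inj: "trivial_kernel (transpose_mat G)"
    by (rule trivial_kernel_transpose_if_full_rank[OF assms(6,7)])
  have k: "1 \<le> k" "k \<le> n" using assms(5) vec_space.rank_le_nc[OF assms(6)] assms(7) by auto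
  have C: "C \<subseteq> carrier_vec n" using assms(6,8) by auto
  have A: "block_diag l nn ks B \<in> carrier_mat n k" if "(\<Sum>i<l. ks i) = k" for ks B
    using block_diag_carrier[of l nn ks B] that n by (simp add: offs_def)
  have "MSRD l nn K n k C \<longleftrightarrow> (\<forall>c\<in>C. c \<noteq> 0\<^sub>v n \<longrightarrow> \<not> srank l nn K c + k \<le> n)"
    using MSRD_iff_srank_lower_bound[OF assms(3) n assms(6) G_inj k assms(8)] by (simp add: not_le)
  also have "\<dots> \<longleftrightarrow> (\<forall>ks B. blocks_over l nn K ks B \<and> (\<Sum>i<l. ks i) = k
      \<and> vec_space.rank n (block_diag l nn ks B) = k
      \<longrightarrow> (\<forall>c\<in>C. c \<noteq> 0\<^sub>v n \<longrightarrow> transpose_mat (block_diag l nn ks B) *\<^sub>v c \<noteq> 0\<^sub>v k))"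
    using srank_add_le_iff_annihilated_by_block_diag[OF assms(3)] C n by blast
  also have "\<dots> \<longleftrightarrow> (\<forall>ks B. blocks_over l nn K ks B \<and> (\<Sum>i<l. ks i) = k
      \<and> vec_space.rank n (block_diag l nn ks B) = k \<longrightarrow> invertible_mat (G * block_diag l nn ks B))"
    using invertible_mult_iff_no_row_space_vector_in_kernel[OF assms(6) G_inj A] assms(8)
    by blast
  finally show ?thesis unfolding blocks_over_def .
qed

end
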